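(* Let $\mathcal{M}=\langle S,\to,L\rangle$ be a labeled transition system and let $B\subseteq S\times S$ be a skipping simulation (SKS) on $\mathcal{M}$. Then $B$ is a reduced well-founded skipping relation (RWFSK) on $\mathcal{M}$.
   Context: A labeled transition system is $\mathcal{M}=\langle S,\to,L\rangle$ where $S$ is a non-empty (possibly infinite, of arbitrary cardinality) set of states, $\to\subseteq S\times S$ is left-total (every state has a successor), and $L$ is a function with domain $S$. A fullpath is an infinite sequence $\sigma$ of states with $\sigma(i)\to\sigma(i+1)$ for all $i\in\omega$; "$\sigma$ is a fullpath starting at $s$" means additionally $\sigma(0)=s$. $w\to^{+}v$ means there is a finite path $w=v_0\to\cdots\to v_k=v$ with $k\ge1$. Matching: let $\mathit{INC}$ be the set of strictly increasing infinite sequences of natural numbers starting at $0$. For a fullpath $\sigma$ and $\pi\in\mathit{INC}$, the $i$-th segment of $\sigma$ w.r.t. $\pi$ is the finite sequence $\sigma(\pi(i)),\dots,\sigma(\pi(i+1)-1)$. For a relation $B$, fullpaths $\sigma,\delta$ and $\pi,\xi\in\mathit{INC}$, $\mathit{corr}(B,\sigma,\pi,\delta,\xi)$ holds iff for every $i\in\omega$ and every state $s$ in the $i$-th segment of $\sigma$ w.r.t. $\pi$, $sB\delta(\xi(i))$. $\mathit{match}(B,\sigma,\delta)$ holds iff there exist $\pi,\xi\in\mathit{INC}$ with $\mathit{corr}(B,\sigma,\pi,\delta,\xi)$. $B\subseteq S\times S$ is a skipping simulation (SKS) on $\mathcal{M}$ iff for all $s,w$ with $sBw$: (SKS1) $L(s)=L(w)$,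 and (SKS2) for every fullpath $\sigma$ starting at $s$ there is a fullpath $\delta$ starting at $w$ with $\mathit{match}(B,\sigma,\delta)$. $B$ is an RWFSK on $\mathcal{M}$ iff (RWFSK1) for all $s,w$ with $sBw$, $L(s)=L(w)$; and (RWFSK2) there exist a well-founded set $\langle W,\prec\rangle$ and a function $\mathit{rankt}:S\times S\to W$ such that for all $s,u,w\in S$ with $s\to u$ and $sBw$, either (a) $uBw$ and $\mathit{rankt}(u,w)\prec\mathit{rankt}(s,w)$, or (b) there is $v$ with $w\to^{+}v$ and $uBv$. *)

theory Defs
  imports Main
begin

definition lts :: "('a \<Rightarrow> 'a \<Rightarrow> bool) \<Rightarrow> ('a \<Rightarrow> 'l) \<Rightarrow> bool" where
  "lts R L \<longleftrightarrow> (\<forall>s. \<exists>u. R s u)"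

definition fullpath :: "('a \<Rightarrow> 'a \<Rightarrow> bool) \<Rightarrow> (nat \<Rightarrow> 'a) \<Rightarrow> bool" where
  "fullpath R \<sigma> \<longleftrightarrow> (\<forall>i. R (\<sigma> i) (\<sigma> (Suc i)))"

definition INC :: "(nat \<Rightarrow> nat) set" where
  "INC = {\<pi>. strict_mono \<pi> \<and> \<pi> 0 = 0}"

definition corr :: "('a \<Rightarrow> 'a \<Rightarrow> bool) \<Rightarrow> (nat \<Rightarrow> 'a) \<Rightarrow> (nat \<Rightarrow> nat)
    \<Rightarrow> (nat \<Rightarrow> 'a) \<Rightarrow> (nat \<Rightarrow> nat) \<Rightarrow> bool" where
  "corr B \<sigma> \<pi> \<delta> \<xi> \<longleftrightarrow>
     (\<forall>i k. \<pi> i \<le> k \<and> k < \<pi> (Suc i) \<longrightarrow> B (\<sigma> k) (\<delta> (\<xi> i)))"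

definition match :: "('a \<Rightarrow> 'a \<Rightarrow> bool) \<Rightarrow> (nat \<Rightarrow> 'a) \<Rightarrow> (nat \<Rightarrow> 'a) \<Rightarrow> bool" where
  "match B \<sigma> \<delta> \<longleftrightarrow> (\<exists>\<pi>\<in>INC. \<exists>\<xi>\<in>INC. corr B \<sigma> \<pi> \<delta> \<xi>)"

definition SKS :: "('a \<Rightarrow> 'a \<Rightarrow> bool) \<Rightarrow> ('a \<Rightarrow> 'l) \<Rightarrow> ('a \<Rightarrow> 'a \<Rightarrow> bool) \<Rightarrow> bool" where
  "SKS R L B \<longleftrightarrow> (\<forall>s w. B s w \<longrightarrow>
     L s = L w \<and>
     (\<forall>\<sigma>. fullpath R \<sigma> \<and> \<sigma> 0 = s \<longrightarrow>
        (\<exists>\<delta>. fullpath R \<delta> \<and> \<delta> 0 = w \<and> match B \<sigma> \<delta>)))"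

definition rwfsk_rank :: "('a \<Rightarrow> 'a \<Rightarrow> bool) \<Rightarrow> ('a \<Rightarrow> 'a \<Rightarrow> bool)
    \<Rightarrow> ('w \<times> 'w) set \<Rightarrow> ('a \<Rightarrow> 'a \<Rightarrow> 'w) \<Rightarrow> bool" where
  "rwfsk_rank R B W rankt \<longleftrightarrow> wf W \<and>
     (\<forall>s u w. R s u \<and> B s w \<longrightarrow>
        (B u w \<and> (rankt u w, rankt s w) \<in> W) \<or> (\<exists>v. R\<^sup>+\<^sup>+ w v \<and> B u v))"

text \<open>RWFSK. The well-founded set is taken inside the type 'a \<times> 'a; this is no
  loss of generality: the image of any rank function S \<times> S \<rightarrow> W injects into S \<times> S.\<close>
definition RWFSK :: "('a \<Rightarrow> 'a \<Rightarrow> bool) \<Rightarrow> ('a \<Rightarrow> 'l) \<Rightarrow> ('a \<Rightarrow> 'a \<Rightarrow> bool) \<Rightarrow> bool" where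
  "RWFSK R L B \<longleftrightarrow> (\<forall>s w. B s w \<longrightarrow> L s = L w) \<and>
     (\<exists>(W :: (('a \<times> 'a) \<times> ('a \<times> 'a)) set) rankt. rwfsk_rank R B W rankt)"

end

theory Submission
  imports Defs
begin

text \<open>Rank a pair (u, w) by itself and let (u, w) lie below (s, w) exactly when s \<rightarrow> u is a
  step that w can only answer by stuttering: u B w, but u is B-related to no proper successor
  of w. An infinite descent in this order is a fullpath from some s whose states after s are
  never related to a proper successor of w; by SKS2 some fullpath from w matches it, and the
  second segments of that matching relate such a state to a proper successor of w, a
  contradiction. If a step s \<rightarrow> u with s B w cannot be answered
  by progress, extend it to a fullpath and match it from w: u is related to some state of the
  matching path, which can then only be w itself, so the step descends in the order.\<close>

lemma fullpath_tranclp: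
  assumes "fullpath R \<delta>" "0 < j"
  shows "R\<^sup>+\<^sup>+ (\<delta> 0) (\<delta> j)"
  using assms(2)
proof (induction j)
  case (Suc j)
  have "R (\<delta> j) (\<delta> (Suc j))" using assms(1) unfolding fullpath_def by blast
  then show ?case
    using Suc by (cases "j = 0") (auto intro: tranclp.trancl_into_trancl)
qed simp

lemma lts_fullpath_from:
  assumes "lts R L"
  obtains \<sigma> where "fullpath R \<sigma>" "\<sigma> 0 = u"
proof -
  define next_state where "next_state x = (SOME y. R x y)" for x
  have "R x (next_state x)" for x
    using assms unfolding lts_def next_state_def by (metis someI_ex)
  then show ?thesis
    using that[of "\<lambda>n. (next_state ^^ n) u"] unfolding fullpath_def by simp
qed

lemma fullpath_prepend:
  assumes "fullpath R \<sigma>" "R s (\<sigma> 0)"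
  shows "fullpath R (case_nat s \<sigma>)"
  using assms unfolding fullpath_def by (auto split: nat.split)

lemma INC_segment_containing:
  assumes "\<pi> \<in> INC"
  shows "\<exists>i. \<pi> i \<le> n \<and> n < \<pi> (Suc i)"
proof -
  have mono: "strict_mono \<pi>" and zero: "\<pi> 0 = 0" using assms unfolding INC_def by auto
  have "n < \<pi> (Suc n)" using strict_mono_imp_increasing[OF mono, of "Suc n"] by simp
  then have ex: "\<exists>i. n < \<pi> i" by blast
  define i where "i = (LEAST i. n < \<pi> i)"
  have above: "n < \<pi> i" using LeastI_ex[OF ex] unfolding i_def .
  then obtain i' where i': "i = Suc i'" using zero by (cases i) auto
  have "\<not> n < \<pi> i'" using not_less_Least[of i' "\<lambda>i. n < \<pi> i"] i' unfolding i_def by simp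
  then show ?thesis using above i' by (metis not_less)
qed

lemma match_relates_state:
  assumes "match B \<sigma> \<delta>"
  shows "\<exists>j. B (\<sigma> n) (\<delta> j)"
proof -
  obtain \<pi> \<xi> where "\<pi> \<in> INC" "corr B \<sigma> \<pi> \<delta> \<xi>"
    using assms unfolding match_def by blast
  then show ?thesis
    using INC_segment_containing[of \<pi> n] unfolding corr_def by blast
qed

lemma match_relates_beyond_start:
  assumes "match B \<sigma> \<delta>"
  shows "\<exists>k>0. \<exists>j>0. B (\<sigma> k) (\<delta> j)"
proof -
  obtain \<pi> \<xi> where \<pi>: "strict_mono \<pi>" "\<pi> 0 = 0" and \<xi>: "strict_mono \<xi>" "\<xi> 0 = 0"
    and c: "corr B \<sigma> \<pi> \<delta> \<xi>"
    using assms unfolding match_def INC_def by blast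
  have "0 < \<pi> 1" using strict_monoD[OF \<pi>(1), of 0 1] \<pi>(2) by simp
  moreover have "0 < \<xi> 1" using strict_monoD[OF \<xi>(1), of 0 1] \<xi>(2) by simp
  moreover have "B (\<sigma> (\<pi> 1)) (\<delta> (\<xi> 1))"
    using c strict_monoD[OF \<pi>(1), of 1 2] unfolding corr_def numeral_2_eq_2 by simp
  ultimately show ?thesis by blast
qed

definition stutter_rel :: "('a \<Rightarrow> 'a \<Rightarrow> bool) \<Rightarrow> ('a \<Rightarrow> 'a \<Rightarrow> bool) \<Rightarrow> (('a \<times> 'a) \<times> ('a \<times> 'a)) set"
  where "stutter_rel R B =
    {((u, w), (s, w)) | s u w. R s u \<and> B s w \<and> B u w \<and> \<not> (\<exists>v. R\<^sup>+\<^sup>+ w v \<and> B u v)}"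

lemma wf_stutter_rel:
  assumes "SKS R L B"
  shows "wf (stutter_rel R B)"
proof (rule ccontr)
  assume "\<not> wf (stutter_rel R B)"
  then obtain f where f: "(f (Suc i), f i) \<in> stutter_rel R B" for i
    unfolding wf_iff_no_infinite_down_chain by blast
  define \<sigma> where "\<sigma> i = fst (f i)" for i
  define w where "w = snd (f 0)"
  have snd_f: "snd (f i) = w" for i
  proof (induction i)
    case (Suc i)
    then show ?case using f[of i] unfolding stutter_rel_def by auto
  qed (simp add: w_def)
  have step: "R (\<sigma> i) (\<sigma> (Suc i)) \<and> B (\<sigma> i) w \<and> \<not> (\<exists>v. R\<^sup>+\<^sup>+ w v \<and> B (\<sigma> (Suc i)) v)" for i
    using f[of i] snd_f[of i] snd_f[of "Suc i"] unfolding stutter_rel_def \<sigma>_def by auto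
  have "fullpath R \<sigma>" using step unfolding fullpath_def by blast
  then obtain \<delta> where \<delta>: "fullpath R \<delta>" "\<delta> 0 = w" "match B \<sigma> \<delta>"
    using assms step[of 0] unfolding SKS_def by blast
  then obtain k j where "0 < k" "0 < j" "B (\<sigma> k) (\<delta> j)"
    using match_relates_beyond_start by blast
  moreover have "R\<^sup>+\<^sup>+ w (\<delta> j)" using fullpath_tranclp[OF \<delta>(1) \<open>0 < j\<close>] \<delta>(2) by simp
  ultimately show False using step[of "k - 1"] by simp
qed

lemma SKS_step_cases:
  assumes "lts R L" "SKS R L B" "R s u" "B s w"
  shows "(B u w \<and> ((u, w), (s, w)) \<in> stutter_rel R B) \<or> (\<exists>v. R\<^sup>+\<^sup>+ w v \<and> B u v)"
proof (cases "\<exists>v. R\<^sup>+\<^sup>+ w v \<and> B u v")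
  case no_progress: False
  obtain \<rho> where \<rho>: "fullpath R \<rho>" "\<rho> 0 = u" using lts_fullpath_from[OF assms(1)] .
  define \<sigma> where "\<sigma> = case_nat s \<rho>"
  have "fullpath R \<sigma>" using fullpath_prepend[OF \<rho>(1)] \<rho>(2) assms(3) unfolding \<sigma>_def by simp
  then obtain \<delta> where \<delta>: "fullpath R \<delta>" "\<delta> 0 = w" "match B \<sigma> \<delta>"
    using assms(2,4) unfolding SKS_def \<sigma>_def by fastforce
  obtain j where "B u (\<delta> j)" using match_relates_state[OF \<delta>(3), of 1] \<rho>(2) unfolding \<sigma>_def by auto
  moreover have "j = 0" using fullpath_tranclp[OF \<delta>(1)] \<delta>(2) no_progress calculation by blast
  ultimately have "B u w" using \<delta>(2) by simp
  then show ?thesis using no_progress assms(3,4) unfolding stutter_rel_def by blast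
qed simp

theorem theorem3:
  fixes R :: "'a \<Rightarrow> 'a \<Rightarrow> bool" and L :: "'a \<Rightarrow> 'l" and B :: "'a \<Rightarrow> 'a \<Rightarrow> bool"
  assumes "lts R L"
    and "SKS R L B"
  shows "RWFSK R L B"
proof -
  have "rwfsk_rank R B (stutter_rel R B) (\<lambda>u w. (u, w))"
    unfolding rwfsk_rank_def
    using wf_stutter_rel[OF assms(2)] SKS_step_cases[OF assms] by simp
  moreover have "\<forall>s w. B s w \<longrightarrow> L s = L w" using assms(2) unfolding SKS_def by blast
  ultimately show ?thesis unfolding RWFSK_def by blast
qed

end
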